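(* Let $p>5$ be a prime and $G=\mathrm{PSL}(2,p)$. No element of $G$ of order $p$ is a witness to failure for $G$.
   Context: For a finite group $G$, a sequence $s=(g_1,\dots,g_n)\in G^n$ is a generating sequence if $G=\langle g_1,\dots,g_n\rangle$; it is irredundant if no proper subsequence of $s$ generates $G$. Let $m(G)$ be the largest length of an irredundant generating sequence of $G$. An element $g\in G$ is a witness to failure if there exists an irredundant generating sequence $s=(g_1,\dots,g_m)$ of $G$ of length $m=m(G)$ such that for no $i\in\{1,\dots,m\}$ does $(g_1,\dots,g_{i-1},g,g_{i+1},\dots,g_m)$ generate $G$. *)

theory Defs
  imports "HOL-Algebra.Algebra"
begin

text \<open>2x2 matrices (a b; c d) over Z/pZ, entries represented by integers in {0..<p}.\<close>

type_synonym mat2 = "int \<times> int \<times> int \<times> int"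

definition SL2 :: "nat \<Rightarrow> mat2 set" where
  "SL2 p = {(a, b, c, d). a \<in> {0..<int p} \<and> b \<in> {0..<int p} \<and> c \<in> {0..<int p}
                \<and> d \<in> {0..<int p} \<and> (a * d - b * c) mod int p = 1 mod int p}"

fun mmul :: "nat \<Rightarrow> mat2 \<Rightarrow> mat2 \<Rightarrow> mat2" where
  "mmul p (a, b, c, d) (e, f, g, h) =
     ((a * e + b * g) mod int p, (a * f + b * h) mod int p,
      (c * e + d * g) mod int p, (c * f + d * h) mod int p)"

fun mneg :: "nat \<Rightarrow> mat2 \<Rightarrow> mat2" where
  "mneg p (a, b, c, d) = ((- a) mod int p, (- b) mod int p, (- c) mod int p, (- d) mod int p)"

text \<open>The image of a matrix in PSL(2,p) = SL(2,p)/{I,-I}: its class {A, -A}.\<close>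

definition pcls :: "nat \<Rightarrow> mat2 \<Rightarrow> mat2 set" where
  "pcls p A = {A, mneg p A}"

definition psl_mult :: "nat \<Rightarrow> mat2 set \<Rightarrow> mat2 set \<Rightarrow> mat2 set" where
  "psl_mult p U V = (\<lambda>(u, v). mmul p u v) ` (U \<times> V)"

definition PSL2 :: "nat \<Rightarrow> mat2 set monoid" where
  "PSL2 p = \<lparr> carrier = pcls p ` SL2 p, monoid.mult = psl_mult p, one = pcls p (1, 0, 0, 1) \<rparr>"

definition generating_seq :: "('a, 'b) monoid_scheme \<Rightarrow> 'a list \<Rightarrow> bool" where
  "generating_seq G s \<longleftrightarrow> set s \<subseteq> carrier G \<and> generate G (set s) = carrier G"

definition irredundant_gen_seq :: "('a, 'b) monoid_scheme \<Rightarrow> 'a list \<Rightarrow> bool" where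
  "irredundant_gen_seq G s \<longleftrightarrow> generating_seq G s \<and>
     (\<forall>I. I \<subset> {..<length s} \<longrightarrow> \<not> generating_seq G (nths s I))"

definition m_irr :: "('a, 'b) monoid_scheme \<Rightarrow> nat" where
  "m_irr G = Max {length s | s. irredundant_gen_seq G s}"

definition witness_to_failure :: "('a, 'b) monoid_scheme \<Rightarrow> 'a \<Rightarrow> bool" where
  "witness_to_failure G g \<longleftrightarrow> g \<in> carrier G \<and>
     (\<exists>s. irredundant_gen_seq G s \<and> length s = m_irr G \<and>
          (\<forall>i < length s. \<not> generating_seq G (s[i := g])))"

end

theory Submission
  imports Defs
begin

text \<open>
  An element \<open>g\<close> of order \<open>p\<close> is conjugate to a nontrivial upper unitriangular class \<open>u\<close>.
  Every subgroup containing \<open>u\<close> is either the whole group or lies in the Borel subgroup of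
  upper triangular classes: conjugating \<open>u\<close> by an element outside the Borel subgroup gives
  \<open>1 + N\<close> with \<open>N\<close> nilpotent with unit lower-left entry, whose powers, conjugated by powers of
  \<open>u\<close>, are all lower unitriangular classes; together with the upper ones they generate.
  Now let \<open>s\<close> be any generating sequence; it has length at least 2 since \<open>PSL(2,p)\<close> is not
  abelian. If no \<open>s[i := u]\<close> generated, each would lie in the Borel subgroup, and so would every
  entry of \<open>s\<close> (it survives in \<open>s[i := u]\<close> for some \<open>i\<close> other than its own index),
  which is absurd.
\<close>

lemma set_subset_if_updates_subset:
  assumes "2 \<le> length xs" "\<And>i. i < length xs \<Longrightarrow> set (xs[i := y]) \<subseteq> A"
  shows "set xs \<subseteq> A"
proof
  fix x assume "x \<in> set xs"
  then obtain j where j: "j < length xs" "xs ! j = x" by (auto simp: in_set_conv_nth)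
  define i where "i = (if j = 0 then 1 else 0 :: nat)"
  have i: "i < length xs" "i \<noteq> j" using assms(1) by (auto simp: i_def)
  then have "x \<in> set (xs[i := y])" using j by (metis length_list_update nth_list_update_neq nth_mem)
  then show "x \<in> A" using assms(2)[OF i(1)] by blast
qed

lemma (in group) generating_seq_length_ge_2:
  assumes "generating_seq G s" "x \<in> carrier G" "y \<in> carrier G" "x \<otimes> y \<noteq> y \<otimes> x"
  shows "2 \<le> length s"
proof (rule ccontr)
  assume "\<not> 2 \<le> length s"
  then obtain z where z: "z \<in> carrier G" "set s \<subseteq> {z}"
    using assms(1) unfolding generating_seq_def
    by (cases s) (auto simp: Suc_le_eq intro: one_closed)
  then have "carrier G \<subseteq> generate G {z}"
    using assms(1) mono_generate unfolding generating_seq_def by blast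
  also have "\<dots> = {z [^] k | k. k \<in> (UNIV :: int set)}"
    by (rule generate_pow[OF z(1)])
  finally obtain i j :: int where "x = z [^] i" "y = z [^] j"
    using assms(2,3) by blast
  then have "x \<otimes> y = y \<otimes> x"
    by (simp add: int_pow_mult[OF z(1), symmetric] add.commute)
  then show False using assms(4) by contradiction
qed

lemma (in group) generating_seq_conj_iff:
  assumes c: "c \<in> carrier G" and s: "set s \<subseteq> carrier G"
  shows "generating_seq G (map (\<lambda>x. c \<otimes> x \<otimes> inv c) s) \<longleftrightarrow> generating_seq G s"
proof -
  define \<phi> where "\<phi> = (\<lambda>x. c \<otimes> x \<otimes> inv c)"
  have "\<phi> \<in> hom G G"
    using c unfolding \<phi>_def by (intro homI) (simp_all add: inv_solve_left m_assoc)
  then interpret \<phi>: group_hom G G \<phi>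
    by (intro group_hom.intro group_hom_axioms.intro is_group)
  have bij: "bij_betw \<phi> (carrier G) (carrier G)"
    using conjugation_is_bij[OF c] unfolding \<phi>_def by simp
  have "\<phi> ` A = carrier G \<longleftrightarrow> A = carrier G" if "A \<subseteq> carrier G" for A
    using inj_on_image_eq_iff[OF bij_betw_imp_inj_on[OF bij] that subset_refl]
      bij_betw_imp_surj_on[OF bij] by simp
  moreover have "set (map \<phi> s) \<subseteq> carrier G"
    using c s unfolding \<phi>_def by auto
  ultimately show ?thesis
    using s generate_incl[OF s] unfolding generating_seq_def \<phi>_def[symmetric]
    by (simp add: \<phi>.generate_img)
qed

text \<open>\<open>Mat a b c d\<close> is the integer matrix \<open>(a b; c d)\<close>. Computations are done in this ring
  and reduced modulo \<open>p\<close> only at the end.\<close>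

datatype imat = Mat int int int int

instantiation imat :: ring_1
begin
fun plus_imat where "Mat a b c d + Mat e f g h = Mat (a + e) (b + f) (c + g) (d + h)"
fun minus_imat where "Mat a b c d - Mat e f g h = Mat (a - e) (b - f) (c - g) (d - h)"
fun uminus_imat where "- Mat a b c d = Mat (- a) (- b) (- c) (- d)"
fun times_imat where
  "Mat a b c d * Mat e f g h = Mat (a * e + b * g) (a * f + b * h) (c * e + d * g) (c * f + d * h)"
definition zero_imat where "0 = Mat 0 0 0 0"
definition one_imat where "1 = Mat 1 0 0 1"
instance
proof
  fix x y z :: imat
  show "x * y * z = x * (y * z)" by (cases x; cases y; cases z) (simp add: algebra_simps)
  show "x + y + z = x + (y + z)" by (cases x; cases y; cases z) (simp add: algebra_simps)
  show "x + y = y + x" by (cases x; cases y) (simp add: algebra_simps)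
  show "0 + x = x" by (cases x) (simp add: zero_imat_def)
  show "- x + x = 0" by (cases x) (simp add: zero_imat_def)
  show "x - y = x + - y" by (cases x; cases y) simp
  show "(x + y) * z = x * z + y * z" by (cases x; cases y; cases z) (simp add: algebra_simps)
  show "x * (y + z) = x * y + x * z" by (cases x; cases y; cases z) (simp add: algebra_simps)
  show "1 * x = x" by (cases x) (simp add: one_imat_def)
  show "x * 1 = x" by (cases x) (simp add: one_imat_def)
  show "(0::imat) \<noteq> 1" by (simp add: zero_imat_def one_imat_def)
qed
end

lemma of_nat_imat: "of_nat k = Mat (int k) 0 0 (int k)"
  by (induction k) (simp_all add: zero_imat_def one_imat_def)

lemma of_int_imat: "of_int k = Mat k 0 0 k"
  by (cases k) (simp_all add: of_nat_imat one_imat_def)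

fun det :: "imat \<Rightarrow> int" where "det (Mat a b c d) = a * d - b * c"
fun trace :: "imat \<Rightarrow> int" where "trace (Mat a b c d) = a + d"
fun adj :: "imat \<Rightarrow> imat" where "adj (Mat a b c d) = Mat d (- b) (- c) a"
fun lower_left :: "imat \<Rightarrow> int" where "lower_left (Mat a b c d) = c"

definition upper_unip :: "int \<Rightarrow> imat" where "upper_unip t = Mat 1 t 0 1"
definition lower_unip :: "int \<Rightarrow> imat" where "lower_unip t = Mat 1 0 t 1"

lemma det_mult: "det (A * B) = det A * det B"
  by (cases A; cases B) (simp add: algebra_simps)

lemma det_power: "det (A ^ n) = det A ^ n"
  by (induction n) (simp_all add: det_mult one_imat_def)

lemma adj_mult_self: "adj A * A = of_int (det A)"
  by (cases A) (simp add: of_int_imat algebra_simps)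

lemma det_one_add: "det (1 + N) = 1 + trace N + det N"
  by (cases N) (simp add: one_imat_def algebra_simps)

lemma lower_left_mult_dvd:
  "int p dvd lower_left A \<Longrightarrow> int p dvd lower_left B \<Longrightarrow> int p dvd lower_left (A * B)"
  by (cases A; cases B) (simp add: dvd_add dvd_mult dvd_mult2)

lemma upper_unip_power: "upper_unip a ^ k = upper_unip (of_nat k * a)"
  by (induction k) (simp_all add: upper_unip_def one_imat_def algebra_simps)

lemma power_one_add_binomial: "((1::'a::ring_1) + x) ^ n = (\<Sum>k\<le>n. of_nat (n choose k) * x ^ k)"
proof (induction n)
  case 0
  then show ?case by simp
next
  case (Suc n)
  have "(1 + x) ^ Suc n = (\<Sum>k\<le>n. of_nat (n choose k) * x ^ k) * (1 + x)"
    by (simp only: power_Suc2 Suc.IH)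
  also have "\<dots> = (\<Sum>k\<le>n. of_nat (n choose k) * x ^ k) + (\<Sum>k\<le>n. of_nat (n choose k) * x ^ Suc k)"
    by (simp add: distrib_left sum_distrib_right mult.assoc power_commutes)
  also have "(\<Sum>k\<le>n. of_nat (n choose k) * x ^ k) = 1 + (\<Sum>k\<le>n. of_nat (n choose Suc k) * x ^ Suc k)"
  proof -
    have "(\<Sum>k\<le>n. of_nat (n choose k) * x ^ k) = (\<Sum>k\<le>Suc n. of_nat (n choose k) * x ^ k)"
      by (simp add: binomial_eq_0)
    then show ?thesis by (subst (asm) sum.atMost_Suc_shift) simp
  qed
  also have "1 + (\<Sum>k\<le>n. of_nat (n choose Suc k) * x ^ Suc k) + (\<Sum>k\<le>n. of_nat (n choose k) * x ^ Suc k)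
      = (\<Sum>k\<le>Suc n. of_nat (Suc n choose k) * x ^ k)"
    by (subst sum.atMost_Suc_shift) (simp add: sum.distrib[symmetric] distrib_right add.commute)
  finally show ?case .
qed

section \<open>Reduction modulo \<open>p\<close> and the group \<open>PSL(2,p)\<close>\<close>

fun reduce :: "nat \<Rightarrow> imat \<Rightarrow> mat2" where
  "reduce p (Mat a b c d) = (a mod int p, b mod int p, c mod int p, d mod int p)"

definition psl_of :: "nat \<Rightarrow> imat \<Rightarrow> mat2 set" where "psl_of p A = pcls p (reduce p A)"

definition unimodular_mod :: "nat \<Rightarrow> imat \<Rightarrow> bool" where
  "unimodular_mod p A \<longleftrightarrow> int p dvd det A - 1"

lemma reduce_eq_iff [simp]: "reduce p (Mat a b c d) = reduce p (Mat a' b' c' d') \<longleftrightarrow>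
  int p dvd a - a' \<and> int p dvd b - b' \<and> int p dvd c - c' \<and> int p dvd d - d'"
  by (simp add: mod_eq_dvd_iff)

lemma reduce_add_cong:
  "reduce p A = reduce p A' \<Longrightarrow> reduce p B = reduce p B' \<Longrightarrow> reduce p (A + B) = reduce p (A' + B')"
  by (cases A; cases A'; cases B; cases B') (auto intro: mod_add_cong)

lemma reduce_mult_cong:
  "reduce p A = reduce p A' \<Longrightarrow> reduce p B = reduce p B' \<Longrightarrow> reduce p (A * B) = reduce p (A' * B')"
  by (cases A; cases A'; cases B; cases B') (auto intro!: mod_add_cong mod_mult_cong)

lemma reduce_uminus_cong: "reduce p A = reduce p A' \<Longrightarrow> reduce p (- A) = reduce p (- A')"
  by (cases A; cases A') (auto intro: mod_minus_cong)

lemma mmul_reduce: "mmul p (reduce p A) (reduce p B) = reduce p (A * B)"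
proof -
  have "(x mod n * (y mod n) + z mod n * (w mod n)) mod n = (x * y + z * w) mod n"
    for x y z w n :: int
    by (metis mod_add_eq mod_mult_eq)
  then show ?thesis by (cases A; cases B) simp
qed

lemma mneg_reduce: "mneg p (reduce p A) = reduce p (- A)"
  by (cases A) (simp add: mod_simps)

lemma pcls_reduce: "pcls p (reduce p A) = {reduce p A, reduce p (- A)}"
  by (simp add: pcls_def mneg_reduce)

declare reduce.simps [simp del]

lemma psl_mult_psl_of: "psl_mult p (psl_of p A) (psl_of p B) = psl_of p (A * B)"
proof -
  have "psl_mult p (psl_of p A) (psl_of p B) =
     {mmul p (reduce p A) (reduce p B), mmul p (reduce p A) (reduce p (- B)),
      mmul p (reduce p (- A)) (reduce p B), mmul p (reduce p (- A)) (reduce p (- B))}"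
    unfolding psl_mult_def psl_of_def pcls_reduce by auto
  also have "\<dots> = {reduce p (A * B), reduce p (- (A * B))}"
    by (auto simp: mmul_reduce)
  finally show ?thesis by (simp add: psl_of_def pcls_reduce)
qed

lemma psl_of_eq_iff:
  "psl_of p A = psl_of p B \<longleftrightarrow> reduce p A = reduce p B \<or> reduce p A = reduce p (- B)"
  by (auto simp: psl_of_def pcls_reduce doubleton_eq_iff dest: reduce_uminus_cong)

lemma psl_of_cong: "reduce p A = reduce p B \<Longrightarrow> psl_of p A = psl_of p B"
  by (simp add: psl_of_eq_iff)

lemma psl_of_uminus: "psl_of p (- A) = psl_of p A"
  by (simp add: psl_of_eq_iff)

lemma unimodular_mod_mult:
  assumes "unimodular_mod p A" "unimodular_mod p B"
  shows "unimodular_mod p (A * B)"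
proof -
  have "det (A * B) - 1 = (det A - 1) * det B + (det B - 1)"
    by (simp add: det_mult algebra_simps)
  then show ?thesis
    using assms unfolding unimodular_mod_def by (metis dvd_add dvd_mult2)
qed

lemma unimodular_mod_one: "unimodular_mod p 1"
  by (simp add: unimodular_mod_def one_imat_def)

lemma unimodular_mod_uminus: "unimodular_mod p A \<Longrightarrow> unimodular_mod p (- A)"
  by (cases A) (simp add: unimodular_mod_def)

lemma unimodular_mod_adj: "unimodular_mod p A \<Longrightarrow> unimodular_mod p (adj A)"
  by (cases A) (simp add: unimodular_mod_def algebra_simps)

lemma unimodular_mod_upper_unip: "unimodular_mod p (upper_unip t)"
  by (simp add: unimodular_mod_def upper_unip_def)

lemma unimodular_mod_lower_unip: "unimodular_mod p (lower_unip t)"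
  by (simp add: unimodular_mod_def lower_unip_def)

lemma reduce_of_int_det: "unimodular_mod p A \<Longrightarrow> reduce p (of_int (det A)) = reduce p 1"
  by (simp add: of_int_imat one_imat_def unimodular_mod_def)

lemma carrier_PSL2:
  assumes "p > 0"
  shows "carrier (PSL2 p) = {psl_of p A | A. unimodular_mod p A}"
proof -
  have "reduce p (Mat a b c d) \<in> SL2 p \<longleftrightarrow> unimodular_mod p (Mat a b c d)" for a b c d
  proof -
    have "(a mod p * (d mod p) - b mod p * (c mod p)) mod p = (a * d - b * c) mod p"
      by (metis mod_diff_eq mod_mult_eq)
    moreover have "int p dvd a * d - b * c - 1 \<longleftrightarrow> (a * d - b * c) mod int p = 1 mod int p"
      by (simp only: mod_eq_dvd_iff)
    ultimately show ?thesis
      using assms by (simp add: SL2_def reduce.simps unimodular_mod_def)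
  qed
  then have SL2_iff: "reduce p A \<in> SL2 p \<longleftrightarrow> unimodular_mod p A" for A
    by (cases A) simp
  have "SL2 p = {reduce p A | A. unimodular_mod p A}"
  proof (intro subset_antisym subsetI)
    fix x assume x: "x \<in> SL2 p"
    then obtain a b c d where "x = (a, b, c, d)" "x = reduce p (Mat a b c d)"
      by (force simp: SL2_def reduce.simps)
    with x show "x \<in> {reduce p A | A. unimodular_mod p A}"
      by (metis (mono_tags) SL2_iff mem_Collect_eq)
  qed (auto simp: SL2_iff)
  then show ?thesis
    unfolding PSL2_def psl_of_def by auto
qed

lemma one_PSL2: "p > 1 \<Longrightarrow> \<one>\<^bsub>PSL2 p\<^esub> = psl_of p 1"
  by (simp add: PSL2_def psl_of_def one_imat_def reduce.simps)

lemma mult_PSL2: "psl_of p A \<otimes>\<^bsub>PSL2 p\<^esub> psl_of p B = psl_of p (A * B)"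
  by (simp add: PSL2_def psl_mult_psl_of)

lemma psl_of_adj_mult: "unimodular_mod p A \<Longrightarrow> psl_of p (adj A * A) = psl_of p 1"
  unfolding adj_mult_self by (intro psl_of_cong reduce_of_int_det)

lemma group_PSL2:
  assumes "p > 1"
  shows "group (PSL2 p)"
proof -
  have car: "carrier (PSL2 p) = {psl_of p A | A. unimodular_mod p A}"
    using carrier_PSL2 assms by simp
  show ?thesis
  proof (rule groupI)
    fix x y assume "x \<in> carrier (PSL2 p)" "y \<in> carrier (PSL2 p)"
    then show "x \<otimes>\<^bsub>PSL2 p\<^esub> y \<in> carrier (PSL2 p)"
      unfolding car by (auto simp: mult_PSL2 intro: unimodular_mod_mult)
  next
    show "\<one>\<^bsub>PSL2 p\<^esub> \<in> carrier (PSL2 p)"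
      unfolding car one_PSL2[OF assms] using unimodular_mod_one by blast
  next
    fix x y z assume "x \<in> carrier (PSL2 p)" "y \<in> carrier (PSL2 p)" "z \<in> carrier (PSL2 p)"
    then show "x \<otimes>\<^bsub>PSL2 p\<^esub> y \<otimes>\<^bsub>PSL2 p\<^esub> z = x \<otimes>\<^bsub>PSL2 p\<^esub> (y \<otimes>\<^bsub>PSL2 p\<^esub> z)"
      unfolding car by (auto simp: mult_PSL2 mult.assoc)
  next
    fix x assume "x \<in> carrier (PSL2 p)"
    then show "\<one>\<^bsub>PSL2 p\<^esub> \<otimes>\<^bsub>PSL2 p\<^esub> x = x"
      unfolding car one_PSL2[OF assms] by (auto simp: mult_PSL2)
  next
    fix x assume "x \<in> carrier (PSL2 p)"
    then obtain A where A: "x = psl_of p A" "unimodular_mod p A" unfolding car by blast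
    then have "psl_of p (adj A) \<otimes>\<^bsub>PSL2 p\<^esub> x = \<one>\<^bsub>PSL2 p\<^esub>"
      by (simp add: mult_PSL2 psl_of_adj_mult one_PSL2[OF assms])
    moreover have "psl_of p (adj A) \<in> carrier (PSL2 p)"
      unfolding car using unimodular_mod_adj[OF A(2)] by blast
    ultimately show "\<exists>y\<in>carrier (PSL2 p). y \<otimes>\<^bsub>PSL2 p\<^esub> x = \<one>\<^bsub>PSL2 p\<^esub>" by blast
  qed
qed

lemma reduce_sum_zero:
  "(\<And>k. k \<in> S \<Longrightarrow> reduce p (f k) = reduce p 0) \<Longrightarrow> reduce p (sum f S) = reduce p 0"
proof (induction S rule: infinite_finite_induct)
  case (insert k S)
  then have "reduce p (f k + sum f S) = reduce p (0 + 0)" by (intro reduce_add_cong) auto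
  then show ?case using insert by simp
qed auto

lemma reduce_of_nat_mult: "reduce p (of_nat p * A) = reduce p 0"
  by (cases A) (simp add: of_nat_imat zero_imat_def)

lemma reduce_one_add_power_prime:
  assumes "Factorial_Ring.prime p"
  shows "reduce p ((1 + N) ^ p) = reduce p (1 + N ^ p)"
proof -
  have p: "1 < p" using assms prime_gt_1_nat by blast
  have "{..p} = insert 0 (insert p {1..<p})" using p by auto
  then have binom: "(1 + N) ^ p = 1 + N ^ p + (\<Sum>k\<in>{1..<p}. of_nat (p choose k) * N ^ k)"
    using p by (simp add: power_one_add_binomial add.assoc)
  have "reduce p (of_nat (p choose k) * N ^ k) = reduce p 0" if "k \<in> {1..<p}" for k
  proof -
    have "p dvd (p choose k)" using assms that by (intro dvd_choose_prime) auto
    then obtain q where "p choose k = p * q" by blast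
    then show ?thesis by (simp add: mult.assoc reduce_of_nat_mult)
  qed
  then have "reduce p (1 + N ^ p + (\<Sum>k\<in>{1..<p}. of_nat (p choose k) * N ^ k))
      = reduce p (1 + N ^ p + 0)"
    by (intro reduce_add_cong reduce_sum_zero) auto
  then show ?thesis using binom by simp
qed

lemma reduce_zero_dvd_det: "reduce p A = reduce p 0 \<Longrightarrow> int p dvd det A"
  by (cases A) (simp add: zero_imat_def)

text \<open>By Cayley--Hamilton, \<open>N * N = trace N * N - det N\<close>.\<close>

lemma reduce_square_zero:
  assumes "int p dvd trace N" "int p dvd det N"
  shows "reduce p (N * N) = reduce p 0"
proof (cases N)
  case (Mat a b c d)
  then have t: "int p dvd a + d" and dt: "int p dvd a * d - b * c" using assms by auto
  have "a * a + b * c = a * (a + d) - (a * d - b * c)" "a * b + b * d = b * (a + d)"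
    "c * a + d * c = c * (a + d)" "c * b + d * d = d * (a + d) - (a * d - b * c)"
    by (simp_all add: algebra_simps)
  then have "int p dvd a * a + b * c" "int p dvd a * b + b * d"
    "int p dvd c * a + d * c" "int p dvd c * b + d * d"
    using t dt by (metis dvd_diff dvd_mult)+
  then show ?thesis unfolding Mat by (simp add: zero_imat_def)
qed

lemma reduce_one_add_power:
  assumes "reduce p (N * N) = reduce p 0"
  shows "reduce p ((1 + N) ^ k) = reduce p (1 + of_nat k * N)"
proof (induction k)
  case (Suc k)
  have "reduce p ((1 + N) ^ Suc k) = reduce p ((1 + of_nat k * N) * (1 + N))"
    unfolding power_Suc2 by (rule reduce_mult_cong[OF Suc.IH refl])
  also have "(1 + of_nat k * N) * (1 + N) = (1 + of_nat (Suc k) * N) + of_nat k * (N * N)"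
    by (simp add: algebra_simps)
  also have "reduce p \<dots> = reduce p ((1 + of_nat (Suc k) * N) + of_nat k * 0)"
    by (rule reduce_add_cong[OF refl reduce_mult_cong[OF refl assms]])
  finally show ?case by simp
qed simp

lemma reduce_upper_conj_nilpotent:
  assumes "int p dvd x + w" "int p dvd x * w - y * z" "int p dvd z * z' - 1"
  shows "reduce p (upper_unip (- x * z') * Mat x y z w * upper_unip (x * z'))
    = reduce p (Mat 0 0 z 0)"
proof -
  define s where "s = - x * z'"
  define y' where "y' = y + s * w - s * x - s * s * z"
  have conj: "upper_unip s * Mat x y z w * upper_unip (x * z') = Mat (x + s * z) y' z (w - s * z)"
    by (simp add: upper_unip_def s_def y'_def algebra_simps)
  have "x + s * z = - x * (z * z' - 1)" by (simp add: s_def algebra_simps)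
  then have a: "int p dvd x + s * z" using assms(3) by simp
  have "w - s * z = (x + w) - (x + s * z)" by simp
  then have d: "int p dvd w - s * z" using assms(1) a by (metis dvd_diff)
  have "z * y' = (w - s * z) * (x + s * z) - (x * w - y * z)"
    by (simp add: y'_def algebra_simps)
  then have "int p dvd z * y'" using d assms(2) by (simp add: dvd_diff)
  moreover have "y' = z' * (z * y') - y' * (z * z' - 1)" by (simp add: algebra_simps)
  ultimately have "int p dvd y'" using assms(3) by (metis dvd_diff dvd_mult dvd_mult2)
  then show ?thesis using a d conj by (simp add: s_def)
qed

lemma reduce_upper_lower_upper:
  assumes "unimodular_mod p (Mat a b c d)" "int p dvd c * c' - 1"
  shows "reduce p (Mat a b c d)
    = reduce p (upper_unip ((a - 1) * c') * lower_unip c * upper_unip ((d - 1) * c'))"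
proof -
  define x y where "x = (a - 1) * c'" and "y = (d - 1) * c'"
  define b' where "b' = (1 + x * c) * y + x"
  have prod: "upper_unip x * lower_unip c * upper_unip y = Mat (1 + x * c) b' c (c * y + 1)"
    by (simp add: upper_unip_def lower_unip_def b'_def algebra_simps)
  have "x * c - (a - 1) = (a - 1) * (c * c' - 1)" "c * y - (d - 1) = (d - 1) * (c * c' - 1)"
    by (simp_all add: x_def y_def algebra_simps)
  then have x: "int p dvd x * c - (a - 1)" and y: "int p dvd c * y - (d - 1)"
    using assms(2) by simp_all
  have "c * (b' - b)
      = (1 + x * c) * (c * y - (d - 1)) + (x * c - (a - 1)) * d + (a * d - b * c - 1)"
    by (simp add: b'_def algebra_simps)
  also have "int p dvd \<dots>"
    using x y assms(1) unfolding unimodular_mod_def by (intro dvd_add dvd_mult dvd_mult2) auto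
  finally have "int p dvd c * (b' - b)" .
  moreover have "b' - b = c' * (c * (b' - b)) - (b' - b) * (c * c' - 1)"
    by (simp add: algebra_simps)
  ultimately have "int p dvd b - b'" using assms(2) by (metis dvd_diff dvd_diff_commute dvd_mult)
  moreover have "int p dvd a - (1 + x * c)" "int p dvd d - (c * y + 1)"
    using x y by (simp_all add: dvd_diff_commute[of _ a] dvd_diff_commute[of _ d] algebra_simps)
  ultimately show ?thesis unfolding prod x_def[symmetric] y_def[symmetric] by simp
qed

lemma coprime_imp_inverse_mod:
  assumes "coprime z (int p)"
  shows "\<exists>z'. int p dvd z * z' - 1"
proof -
  obtain u v where "u * z + v * int p = 1"
    using bezout_int[of z "int p"] assms by (metis coprime_imp_gcd_eq_1)
  then have "z * u - 1 = int p * (- v)" by (simp add: algebra_simps)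
  then show ?thesis by (metis dvd_triv_left)
qed

locale psl_odd_prime =
  fixes p :: nat
  assumes prime_p: "Factorial_Ring.prime p" and p_gt_2: "2 < p"
begin

lemma p_gt_1: "1 < p"
  using p_gt_2 by simp

end

sublocale psl_odd_prime \<subseteq> G: group "PSL2 p"
  using group_PSL2 psl_odd_prime.p_gt_1 psl_odd_prime_axioms by blast

context psl_odd_prime
begin

lemma int_prime_p: "Factorial_Ring.prime (int p)"
  using prime_p by simp

lemma not_dvd_one: "\<not> int p dvd 1"
  using p_gt_1 by simp

lemma inverse_mod: "\<not> int p dvd z \<Longrightarrow> \<exists>z'. int p dvd z * z' - 1"
  using coprime_imp_inverse_mod int_prime_p prime_imp_coprime coprime_commute by blast

lemma exists_nat_mult_mod:
  assumes "\<not> int p dvd a"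
  obtains k :: nat where "int p dvd int k * a - t"
proof -
  obtain a' where a': "int p dvd a * a' - 1" using inverse_mod[OF assms] by blast
  define k where "k = nat ((t * a') mod int p)"
  have "int k = (t * a') mod int p"
    using p_gt_1 by (simp add: k_def)
  also have "\<dots> = t * a' - int p * ((t * a') div int p)"
    by (simp add: minus_div_mult_eq_mod[symmetric])
  finally have k: "int k = t * a' - int p * ((t * a') div int p)" .
  have "int k * a - t = t * (a * a' - 1) - int p * ((t * a') div int p * a)"
    unfolding k by (simp add: algebra_simps)
  also have "int p dvd \<dots>" by (intro dvd_diff dvd_mult[OF a'] dvd_triv_left)
  finally show thesis using that by blast
qed

lemma carrier_eq: "carrier (PSL2 p) = {psl_of p A | A. unimodular_mod p A}"
  using carrier_PSL2 p_gt_1 by simp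

lemma psl_of_in_carrier: "unimodular_mod p A \<Longrightarrow> psl_of p A \<in> carrier (PSL2 p)"
  using carrier_eq by auto

lemma carrierE:
  assumes "x \<in> carrier (PSL2 p)"
  obtains A where "x = psl_of p A" "unimodular_mod p A"
  using assms carrier_eq by auto

lemma one_eq: "\<one>\<^bsub>PSL2 p\<^esub> = psl_of p 1"
  using one_PSL2 p_gt_1 by simp

lemma inv_psl_of: "unimodular_mod p A \<Longrightarrow> inv\<^bsub>PSL2 p\<^esub> (psl_of p A) = psl_of p (adj A)"
  by (intro G.inv_equality)
    (simp_all add: mult_PSL2 psl_of_adj_mult one_eq psl_of_in_carrier unimodular_mod_adj)

lemma pow_psl_of: "psl_of p A [^]\<^bsub>PSL2 p\<^esub> (n::nat) = psl_of p (A ^ n)"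
  by (induction n) (simp_all add: one_eq mult_PSL2 power_commutes)

lemma conj_psl_of:
  "unimodular_mod p C \<Longrightarrow>
    psl_of p C \<otimes>\<^bsub>PSL2 p\<^esub> psl_of p A \<otimes>\<^bsub>PSL2 p\<^esub> inv\<^bsub>PSL2 p\<^esub> psl_of p C
      = psl_of p (C * A * adj C)"
  by (simp add: inv_psl_of mult_PSL2)

lemma psl_of_power_mem:
  "subgroup K (PSL2 p) \<Longrightarrow> psl_of p A \<in> K \<Longrightarrow> psl_of p (A ^ k) \<in> K"
  using G.subgroup_int_pow_closed[of K "psl_of p A" "int k"]
  by (simp add: int_pow_int pow_psl_of)

section \<open>Elements of order \<open>p\<close>\<close>

lemma order_p_imp_unipotent:
  assumes "g \<in> carrier (PSL2 p)" "G.ord g = p"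
  obtains N where "g = psl_of p (1 + N)" "int p dvd trace N" "int p dvd det N"
    "reduce p N \<noteq> reduce p 0"
proof -
  obtain A where A: "g = psl_of p A" "unimodular_mod p A" using carrierE assms(1) by blast
  have "psl_of p (A ^ p) = psl_of p 1"
    using G.pow_ord_eq_1[OF assms(1)] assms(2) A by (simp add: pow_psl_of one_eq)
  then have "reduce p (A ^ p) = reduce p 1 \<or> reduce p (A ^ p) = reduce p (- 1)"
    by (simp add: psl_of_eq_iff)
  \<comment> \<open>Since \<open>p\<close> is odd, replacing \<open>A\<close> by \<open>- A\<close> turns \<open>A ^ p \<equiv> - 1\<close> into \<open>A ^ p \<equiv> 1\<close>.\<close>
  moreover have "(- A) ^ p = - (A ^ p)"
    using prime_odd_nat[OF prime_p] p_gt_2 by simp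
  ultimately obtain B where
    B: "g = psl_of p B" "unimodular_mod p B" "reduce p (B ^ p) = reduce p 1"
    using A psl_of_uminus unimodular_mod_uminus reduce_uminus_cong
    by (metis minus_minus)
  define N where "N = B - 1"
  have B_eq: "B = 1 + N" by (simp add: N_def)
  have "reduce p (1 + N ^ p) = reduce p (1 + 0)"
    using reduce_one_add_power_prime[OF prime_p, of N] B(3) B_eq by simp
  then have "reduce p (- 1 + (1 + N ^ p)) = reduce p (- 1 + (1 + 0))"
    by (rule reduce_add_cong[OF refl])
  then have "int p dvd det N ^ p"
    using reduce_zero_dvd_det[of p "N ^ p"] by (simp add: det_power)
  then have det_N: "int p dvd det N"
    using prime_dvd_power[OF int_prime_p] by blast
  have "int p dvd trace N + det N"
    using B(2) det_one_add[of N] unfolding B_eq unimodular_mod_def by simp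
  then have "int p dvd trace N"
    using det_N by (simp add: dvd_add_left_iff)
  moreover have "reduce p N \<noteq> reduce p 0"
  proof
    assume "reduce p N = reduce p 0"
    then have "reduce p (1 + N) = reduce p (1 + 0)" by (rule reduce_add_cong[OF refl])
    then have "g = \<one>\<^bsub>PSL2 p\<^esub>"
      unfolding B(1) B_eq one_eq by (metis add.right_neutral psl_of_cong)
    then show False
      using G.ord_eq_1[OF assms(1)] assms(2) p_gt_1 by simp
  qed
  ultimately show thesis using that B(1) B_eq det_N by blast
qed

lemma unipotent_conj_upper:
  assumes "int p dvd trace N" "int p dvd det N" "reduce p N \<noteq> reduce p 0"
  obtains C \<mu> where "det C = 1" "\<not> int p dvd \<mu>"
    "reduce p (C * (1 + N) * adj C) = reduce p (upper_unip \<mu>)"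
proof (cases N)
  case (Mat x y z w)
  have tr: "int p dvd x + w" and dt: "int p dvd x * w - y * z" using assms Mat by auto
  show thesis
  proof (cases "int p dvd z")
    case True
    have "x * x = x * (x + w) - (x * w - y * z) - y * z" by (simp add: algebra_simps)
    then have "int p dvd x * x" using tr dt True by (metis dvd_diff dvd_mult dvd_mult2)
    then have x: "int p dvd x" using int_prime_p by (simp add: prime_dvd_mult_iff)
    have "w = (x + w) - x" by simp
    then have w: "int p dvd w" using tr x by (metis dvd_diff)
    have "\<not> int p dvd y" using assms(3) Mat x w True by (auto simp: zero_imat_def)
    moreover have "reduce p (1 * (1 + N) * adj 1) = reduce p (upper_unip y)"
      using Mat x w True by (simp add: one_imat_def upper_unip_def)
    ultimately show thesis using that[of 1] by (simp add: one_imat_def)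
  next
    case False
    \<comment> \<open>Conjugating by \<open>V\<close> kills the diagonal of \<open>N\<close>; the Weyl element \<open>W\<close> then moves the
      remaining lower-left entry to the upper right.\<close>
    then obtain z' where z': "int p dvd z * z' - 1" using inverse_mod by blast
    define V where "V = upper_unip (- x * z')"
    define W where "W = Mat 0 (- 1) 1 0"
    have conj: "(W * V) * (1 + N) * adj (W * V) = W * (1 + V * N * upper_unip (x * z')) * adj W"
      using Mat by (simp add: V_def W_def upper_unip_def one_imat_def algebra_simps)
    have "reduce p (1 + V * N * upper_unip (x * z')) = reduce p (1 + Mat 0 0 z 0)"
      unfolding V_def Mat by (intro reduce_add_cong refl reduce_upper_conj_nilpotent tr dt z')
    then have "reduce p (W * (1 + V * N * upper_unip (x * z')) * adj W)
        = reduce p (W * (1 + Mat 0 0 z 0) * adj W)"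
      by (intro reduce_mult_cong refl)
    also have "W * (1 + Mat 0 0 z 0) * adj W = upper_unip (- z)"
      by (simp add: W_def upper_unip_def one_imat_def)
    finally show thesis
      using that[of "W * V" "- z"] conj False by (simp add: W_def V_def upper_unip_def)
  qed
qed

lemma order_p_conj_upper:
  assumes "g \<in> carrier (PSL2 p)" "G.ord g = p"
  obtains c \<mu> where "c \<in> carrier (PSL2 p)" "\<not> int p dvd \<mu>"
    "c \<otimes>\<^bsub>PSL2 p\<^esub> g \<otimes>\<^bsub>PSL2 p\<^esub> inv\<^bsub>PSL2 p\<^esub> c = psl_of p (upper_unip \<mu>)"
proof -
  obtain N where N: "g = psl_of p (1 + N)" "int p dvd trace N" "int p dvd det N"
    "reduce p N \<noteq> reduce p 0"
    using order_p_imp_unipotent[OF assms] by blast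
  obtain C \<mu> where C: "det C = 1" "\<not> int p dvd \<mu>"
    "reduce p (C * (1 + N) * adj C) = reduce p (upper_unip \<mu>)"
    using unipotent_conj_upper[OF N(2-4)] by blast
  then have "unimodular_mod p C" by (simp add: unimodular_mod_def)
  then have "psl_of p C \<otimes>\<^bsub>PSL2 p\<^esub> g \<otimes>\<^bsub>PSL2 p\<^esub> inv\<^bsub>PSL2 p\<^esub> psl_of p C
      = psl_of p (C * (1 + N) * adj C)"
    unfolding N(1) by (rule conj_psl_of)
  also have "\<dots> = psl_of p (upper_unip \<mu>)"
    by (rule psl_of_cong[OF C(3)])
  finally show thesis
    using that C(2) psl_of_in_carrier \<open>unimodular_mod p C\<close> by blast
qed

section \<open>The Borel subgroup\<close>

definition borel :: "mat2 set set" where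
  "borel = {psl_of p A | A. unimodular_mod p A \<and> int p dvd lower_left A}"

lemma subgroup_borel: "subgroup borel (PSL2 p)"
proof (rule G.subgroupI)
  show "borel \<subseteq> carrier (PSL2 p)"
    unfolding borel_def using psl_of_in_carrier by blast
  show "borel \<noteq> {}"
    unfolding borel_def using unimodular_mod_one by (force simp: one_imat_def)
next
  fix a assume "a \<in> borel"
  then obtain A where "a = psl_of p A" "unimodular_mod p A" "int p dvd lower_left A"
    unfolding borel_def by blast
  moreover have "int p dvd lower_left (adj A)"
    using \<open>int p dvd lower_left A\<close> by (cases A) simp
  ultimately show "inv\<^bsub>PSL2 p\<^esub> a \<in> borel"
    unfolding borel_def by (auto simp: inv_psl_of intro: unimodular_mod_adj)
next
  fix a b assume "a \<in> borel" "b \<in> borel"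
  then show "a \<otimes>\<^bsub>PSL2 p\<^esub> b \<in> borel"
    unfolding borel_def by (auto simp: mult_PSL2 intro: unimodular_mod_mult lower_left_mult_dvd)
qed

lemma lower_unip_notin_borel: "psl_of p (lower_unip 1) \<notin> borel"
proof
  assume "psl_of p (lower_unip 1) \<in> borel"
  then obtain A where A: "psl_of p (lower_unip 1) = psl_of p A" "int p dvd lower_left A"
    unfolding borel_def by blast
  obtain a b c d where A_eq: "A = Mat a b c d" by (cases A)
  have "int p dvd 1 - c \<or> int p dvd 1 + c"
    using A(1) A_eq by (auto simp: psl_of_eq_iff lower_unip_def)
  moreover have "int p dvd c" using A(2) A_eq by simp
  ultimately have "int p dvd (1 - c) + c \<or> int p dvd (1 + c) - c"
    by (metis dvd_add dvd_diff)
  then show False using not_dvd_one by simp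
qed

lemma upper_lower_unip_not_commute:
  "psl_of p (upper_unip 1) \<otimes>\<^bsub>PSL2 p\<^esub> psl_of p (lower_unip 1)
    \<noteq> psl_of p (lower_unip 1) \<otimes>\<^bsub>PSL2 p\<^esub> psl_of p (upper_unip 1)"
proof
  assume "psl_of p (upper_unip 1) \<otimes>\<^bsub>PSL2 p\<^esub> psl_of p (lower_unip 1)
    = psl_of p (lower_unip 1) \<otimes>\<^bsub>PSL2 p\<^esub> psl_of p (upper_unip 1)"
  then have "int p dvd 1 \<or> int p dvd 2"
    by (auto simp: mult_PSL2 psl_of_eq_iff upper_unip_def lower_unip_def)
  then show False using p_gt_2 by (auto dest: zdvd_imp_le)
qed

lemma upper_unip_mem:
  assumes "subgroup K (PSL2 p)" "psl_of p (upper_unip \<mu>) \<in> K" "\<not> int p dvd \<mu>"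
  shows "psl_of p (upper_unip t) \<in> K"
proof -
  obtain k :: nat where k: "int p dvd int k * \<mu> - t"
    using exists_nat_mult_mod[OF assms(3)] by blast
  have "psl_of p (upper_unip (of_nat k * \<mu>)) \<in> K"
    using psl_of_power_mem[OF assms(1,2), of k] by (simp add: upper_unip_power)
  moreover have "psl_of p (upper_unip (of_nat k * \<mu>)) = psl_of p (upper_unip t)"
    using k by (simp add: psl_of_eq_iff upper_unip_def)
  ultimately show ?thesis by simp
qed

lemma lower_upper_lower_upper_decomp:
  assumes "unimodular_mod p A"
  obtains a x c y where
    "reduce p A = reduce p (lower_unip a * upper_unip x * lower_unip c * upper_unip y)"
proof -
  obtain a0 b0 c0 d0 where A: "A = Mat a0 b0 c0 d0" by (cases A)
  obtain a where a: "\<not> int p dvd a * a0 + c0"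
  proof (cases "int p dvd c0")
    case True
    have "\<not> int p dvd a0"
    proof
      assume "int p dvd a0"
      then have "int p dvd a0 * d0 - b0 * c0"
        using True by (metis dvd_diff dvd_mult dvd_mult2)
      moreover have "int p dvd a0 * d0 - b0 * c0 - 1"
        using assms A unfolding unimodular_mod_def by simp
      ultimately have "int p dvd (a0 * d0 - b0 * c0) - (a0 * d0 - b0 * c0 - 1)"
        by (rule dvd_diff)
      then show False using not_dvd_one by simp
    qed
    then show thesis using that[of 1] True by (simp add: dvd_add_left_iff)
  qed (use that[of 0] in simp)
  then obtain c' where c': "int p dvd (a * a0 + c0) * c' - 1" using inverse_mod by blast
  define B where "B = lower_unip a * A"
  have B: "B = Mat a0 b0 (a * a0 + c0) (a * b0 + d0)"
    by (simp add: B_def A lower_unip_def)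
  have "unimodular_mod p B"
    unfolding B_def using assms by (intro unimodular_mod_mult unimodular_mod_lower_unip)
  then have "reduce p B = reduce p (upper_unip ((a0 - 1) * c') * lower_unip (a * a0 + c0)
      * upper_unip ((a * b0 + d0 - 1) * c'))"
    unfolding B using c' by (rule reduce_upper_lower_upper)
  moreover have "A = lower_unip (- a) * B"
    by (simp add: B A lower_unip_def)
  ultimately show thesis
    using that reduce_mult_cong[OF refl] by (metis mult.assoc)
qed

lemma subgroup_unip_eq_carrier:
  assumes "subgroup K (PSL2 p)"
    and "\<And>t. psl_of p (upper_unip t) \<in> K" "\<And>t. psl_of p (lower_unip t) \<in> K"
  shows "K = carrier (PSL2 p)"
proof
  show "carrier (PSL2 p) \<subseteq> K"
  proof
    fix g assume "g \<in> carrier (PSL2 p)"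
    then obtain A where A: "g = psl_of p A" "unimodular_mod p A" using carrierE by blast
    obtain a x c y where
      "reduce p A = reduce p (lower_unip a * upper_unip x * lower_unip c * upper_unip y)"
      using lower_upper_lower_upper_decomp[OF A(2)] by blast
    then have "g = psl_of p (lower_unip a) \<otimes>\<^bsub>PSL2 p\<^esub> psl_of p (upper_unip x)
        \<otimes>\<^bsub>PSL2 p\<^esub> psl_of p (lower_unip c) \<otimes>\<^bsub>PSL2 p\<^esub> psl_of p (upper_unip y)"
      unfolding A(1) mult_PSL2 by (rule psl_of_cong)
    then show "g \<in> K" using assms by (simp add: subgroup.m_closed)
  qed
qed (rule subgroup.subset[OF assms(1)])

lemma lower_unip_mem:
  assumes K: "subgroup K (PSL2 p)"
    and upper: "psl_of p (upper_unip \<mu>) \<in> K" "\<not> int p dvd \<mu>"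
    and N: "psl_of p (1 + N) \<in> K" "int p dvd trace N" "int p dvd det N"
      "\<not> int p dvd lower_left N"
  shows "psl_of p (lower_unip t) \<in> K"
proof -
  obtain x y z w where N_eq: "N = Mat x y z w" by (cases N)
  then obtain z' where z': "int p dvd z * z' - 1" using inverse_mod N(4) by auto
  obtain k :: nat where k: "int p dvd int k * z - t" using exists_nat_mult_mod N(4) N_eq by auto
  define V where "V = upper_unip (- x * z')"
  have "psl_of p ((1 + N) ^ k) \<in> K" by (rule psl_of_power_mem[OF K N(1)])
  moreover have "reduce p ((1 + N) ^ k) = reduce p (1 + of_nat k * N)"
    by (rule reduce_one_add_power[OF reduce_square_zero[OF N(2,3)]])
  ultimately have "psl_of p (1 + of_nat k * N) \<in> K" by (metis psl_of_cong)
  moreover have "psl_of p V \<in> K"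
    unfolding V_def by (rule upper_unip_mem[OF K upper])
  ultimately have "psl_of p V \<otimes>\<^bsub>PSL2 p\<^esub> psl_of p (1 + of_nat k * N)
      \<otimes>\<^bsub>PSL2 p\<^esub> inv\<^bsub>PSL2 p\<^esub> psl_of p V \<in> K"
    using K by (simp add: subgroup.m_closed subgroup.m_inv_closed)
  then have "psl_of p (V * (1 + of_nat k * N) * adj V) \<in> K"
    by (simp add: conj_psl_of V_def unimodular_mod_upper_unip)
  moreover have "V * (1 + of_nat k * N) * adj V = 1 + of_nat k * (V * N * upper_unip (x * z'))"
    by (simp add: V_def N_eq upper_unip_def one_imat_def of_nat_imat algebra_simps)
  moreover have "reduce p (V * N * upper_unip (x * z')) = reduce p (Mat 0 0 z 0)"
    unfolding V_def N_eq by (rule reduce_upper_conj_nilpotent) (use N(2,3) N_eq z' in auto)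
  then have "reduce p (1 + of_nat k * (V * N * upper_unip (x * z')))
      = reduce p (1 + of_nat k * Mat 0 0 z 0)"
    by (intro reduce_add_cong reduce_mult_cong refl)
  moreover have "reduce p (1 + of_nat k * Mat 0 0 z 0) = reduce p (lower_unip t)"
    using k by (simp add: lower_unip_def one_imat_def of_nat_imat)
  ultimately show ?thesis by (metis psl_of_cong)
qed

lemma subgroup_upper_unip_borel_or_carrier:
  assumes K: "subgroup K (PSL2 p)"
    and upper: "psl_of p (upper_unip \<mu>) \<in> K" "\<not> int p dvd \<mu>"
  shows "K = carrier (PSL2 p) \<or> K \<subseteq> borel"
proof (rule disjCI)
  assume "\<not> K \<subseteq> borel"
  then obtain h where h: "h \<in> K" "h \<notin> borel" by blast
  then obtain A where A: "h = psl_of p A" "unimodular_mod p A"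
    using K carrierE subgroup.subset by blast
  then have ll_A: "\<not> int p dvd lower_left A" using h(2) unfolding borel_def by blast
  \<comment> \<open>Conjugating \<open>upper_unip \<mu>\<close> by \<open>A\<close> gives \<open>det A + N\<close> with \<open>N\<close> nilpotent and
    lower-left entry \<open>- \<mu> * lower_left A ^ 2\<close>.\<close>
  define N where "N = A * Mat 0 \<mu> 0 0 * adj A"
  have "psl_of p (A * upper_unip \<mu> * adj A) \<in> K"
    using h(1) upper(1) K A
    by (simp add: subgroup.m_closed subgroup.m_inv_closed flip: conj_psl_of)
  moreover have "A * upper_unip \<mu> * adj A = of_int (det A) + N"
    unfolding N_def by (cases A) (simp add: upper_unip_def of_int_imat algebra_simps)
  moreover have "reduce p (of_int (det A) + N) = reduce p (1 + N)"
    by (intro reduce_add_cong reduce_of_int_det[OF A(2)] refl)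
  ultimately have N_mem: "psl_of p (1 + N) \<in> K" by (metis psl_of_cong)
  have "trace N = 0" "det N = 0" "lower_left N = - \<mu> * (lower_left A * lower_left A)"
    unfolding N_def by (cases A; simp add: algebra_simps)+
  moreover have "\<not> int p dvd \<mu> * (lower_left A * lower_left A)"
    using upper(2) ll_A int_prime_p by (simp add: prime_dvd_mult_iff)
  ultimately have "psl_of p (lower_unip t) \<in> K" for t
    using lower_unip_mem[OF K upper N_mem] by simp
  then show "K = carrier (PSL2 p)"
    using subgroup_unip_eq_carrier[OF K] upper_unip_mem[OF K upper] by blast
qed

section \<open>Replacing a generator by an element of order \<open>p\<close>\<close>

lemma upper_unip_replaces_generator:
  assumes "generating_seq (PSL2 p) s" "\<not> int p dvd \<mu>"
  shows "\<exists>i<length s. generating_seq (PSL2 p) (s[i := psl_of p (upper_unip \<mu>)])"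
proof (rule ccontr)
  define u where "u = psl_of p (upper_unip \<mu>)"
  assume "\<not> (\<exists>i<length s. generating_seq (PSL2 p) (s[i := psl_of p (upper_unip \<mu>)]))"
  then have fails: "\<not> generating_seq (PSL2 p) (s[i := u])" if "i < length s" for i
    using that u_def by blast
  have u: "u \<in> carrier (PSL2 p)"
    unfolding u_def by (rule psl_of_in_carrier[OF unimodular_mod_upper_unip])
  have s: "set s \<subseteq> carrier (PSL2 p)" "generate (PSL2 p) (set s) = carrier (PSL2 p)"
    using assms(1) unfolding generating_seq_def by auto
  have updates: "set (s[i := u]) \<subseteq> borel" if i: "i < length s" for i
  proof -
    define K where "K = generate (PSL2 p) (set (s[i := u]))"
    have sub: "set (s[i := u]) \<subseteq> carrier (PSL2 p)"
      using s(1) u set_update_subset_insert by fastforce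
    have "subgroup K (PSL2 p)"
      unfolding K_def by (rule G.generate_is_subgroup[OF sub])
    moreover have "psl_of p (upper_unip \<mu>) \<in> K"
      unfolding K_def u_def[symmetric] by (rule generate.incl) (simp add: set_update_memI i)
    moreover have "K \<noteq> carrier (PSL2 p)"
      using fails[OF i] sub unfolding generating_seq_def K_def by auto
    ultimately have "K \<subseteq> borel"
      using subgroup_upper_unip_borel_or_carrier assms(2) by blast
    then show ?thesis
      unfolding K_def using generate.incl[of _ "set (s[i := u])" "PSL2 p"] by blast
  qed
  have length: "2 \<le> length s"
    using G.generating_seq_length_ge_2[OF assms(1) _ _ upper_lower_unip_not_commute]
    by (simp add: psl_of_in_carrier unimodular_mod_upper_unip unimodular_mod_lower_unip)
  have "set s \<subseteq> borel"
    by (rule set_subset_if_updates_subset[OF length updates])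
  then have "carrier (PSL2 p) \<subseteq> borel"
    using G.generate_subgroup_incl[OF _ subgroup_borel] s(2) by metis
  then show False
    using lower_unip_notin_borel psl_of_in_carrier[OF unimodular_mod_lower_unip] by blast
qed

lemma order_p_replaces_generator:
  assumes "g \<in> carrier (PSL2 p)" "G.ord g = p" "generating_seq (PSL2 p) s"
  shows "\<exists>i<length s. generating_seq (PSL2 p) (s[i := g])"
proof -
  obtain c \<mu> where c: "c \<in> carrier (PSL2 p)" "\<not> int p dvd \<mu>"
    "c \<otimes>\<^bsub>PSL2 p\<^esub> g \<otimes>\<^bsub>PSL2 p\<^esub> inv\<^bsub>PSL2 p\<^esub> c = psl_of p (upper_unip \<mu>)"
    using order_p_conj_upper[OF assms(1,2)] by blast
  define \<phi> where "\<phi> = (\<lambda>x. c \<otimes>\<^bsub>PSL2 p\<^esub> x \<otimes>\<^bsub>PSL2 p\<^esub> inv\<^bsub>PSL2 p\<^esub> c)"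
  have s: "set s \<subseteq> carrier (PSL2 p)"
    using assms(3) unfolding generating_seq_def by blast
  then have "generating_seq (PSL2 p) (map \<phi> s)"
    using G.generating_seq_conj_iff[OF c(1)] assms(3) unfolding \<phi>_def by blast
  moreover have "\<phi> g = psl_of p (upper_unip \<mu>)"
    using c(3) unfolding \<phi>_def .
  ultimately obtain i where i: "i < length s" "generating_seq (PSL2 p) (map \<phi> (s[i := g]))"
    using upper_unip_replaces_generator[OF _ c(2)] by (fastforce simp: map_update)
  moreover have "set (s[i := g]) \<subseteq> carrier (PSL2 p)"
    using s assms(1) set_update_subset_insert by fastforce
  ultimately show ?thesis
    using G.generating_seq_conj_iff[OF c(1)] unfolding \<phi>_def by blast
qed

end

theorem lemma3:
  fixes p :: nat and g :: "mat2 set"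
  assumes "Factorial_Ring.prime p" and "p > 5"
    and "g \<in> carrier (PSL2 p)"
    and "group.ord (PSL2 p) g = p"
  shows "\<not> witness_to_failure (PSL2 p) g"
proof
  interpret psl_odd_prime p
    using assms(1,2) by unfold_locales auto
  assume "witness_to_failure (PSL2 p) g"
  then obtain s where "irredundant_gen_seq (PSL2 p) s"
    and "\<forall>i<length s. \<not> generating_seq (PSL2 p) (s[i := g])"
    unfolding witness_to_failure_def by blast
  then show False
    using order_p_replaces_generator[OF assms(3,4)] unfolding irredundant_gen_seq_def by blast
qed

end
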